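(* Let $(X,\tau)$ be a topological space and $\mathcal{F}:\mathcal{O}(X)^{\mathrm{op}}\to\mathbf{Set}$ a presheaf. Then: (1) $B^1_{\mathcal{F}}$ is a base of compact open sets for $(\Lambda^1_{\mathcal{F}},\tau^1_{\mathcal{F}})$; hence $(\Lambda^1_{\mathcal{F}},\tau^1_{\mathcal{F}})$ is locally compact; (2) for every $G\in\mathrm{St}(\mathrm{RO}(X))$ the stalk $\mathcal{F}_G$ is a discrete and closed subspace of $\Lambda^1_{\mathcal{F}}$; (3) $p^1_{\mathcal{F}}:\Lambda^1_{\mathcal{F}}\to\mathrm{St}(\mathrm{RO}(X))$ is continuous, and for every $U\in\mathcal{O}(X)$ and $f\in\mathcal{F}(U)$, $\dot f$ is a local section of $p^1_{\mathcal{F}}$ over $N_{\mathrm{Reg}(U)}$; hence $\Lambda^1_{\mathcal{F}}$ is an étalé space over $\mathrm{St}(\mathrm{RO}(X))$; (4) $\Lambda^1_{\mathcal{F}}$ is Hausdorff and zero-dimensional, in particular Tychonoff; (5) if $\Lambda^1_{\mathcal{F}}$ has an infinite stalk, then it is non-compact.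
   Context: $\mathcal{O}(X)$ is the set of non-empty open subsets of $X$ ordered by inclusion; for $f\in\mathcal{F}(V)$ and $U\subseteq V$ write $f\restriction U=\mathcal{F}(U\subseteq V)(f)$. $\mathrm{Reg}(U)=\mathrm{Int}\,\mathrm{Cl}\,U$; $\mathrm{RO}(X)$ is the complete boolean algebra of regular open sets; $\mathrm{St}(\mathrm{RO}(X))$ is its Stone space of ultrafilters with clopen sets $N_q=\{G:q\in G\}$, $q\in\mathrm{RO}(X)$. For an ultrafilter $G$ on $\mathrm{RO}(X)$ let $\bar G=\{U\in\mathcal{O}(X):\mathrm{Reg}(U)\in G\}$. For $f\in\mathcal{F}(U_f)$, $g\in\mathcal{F}(U_g)$ with $U_f,U_g\in\bar G$, set $f\equiv_G g$ iff there is $U\in\bar G$ with $U\subseteq U_f\cap U_g$ such that $D_{f,g}=\{V\in\mathcal{O}(X):V\subseteq U_f\cap U_g,\ f\restriction V=g\restriction V\}$ is dense below $U$ (every non-empty open $W\subseteq U$ contains some element of $D_{f,g}$). Let $[f]_G$ be the class of $f$, $\mathcal{F}_G=\{[f]_G:f\in\mathcal{F}(U_f),U_f\in\bar G\}$ (the stalk over $G$), $\Lambda^1_{\mathcal{F}}=\coprod_{G\in\mathrm{St}(\mathrm{RO}(X))}\mathcal{F}_G$ and $p^1_{\mathcal{F}}([f]_G)=G$. For $f\in\mathcal{F}(U)$, $\dot f:N_{\mathrm{Reg}(U)}\to\Lambda^1_{\mathcal{F}}$ is $G\mapsto[f]_G$. $\tau^1_{\mathcal{F}}$ is the topology generated by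 $B^1_{\mathcal{F}}=\{\dot f[N_q]: q\in\mathrm{RO}(X),\ q\subseteq\mathrm{Reg}(U),\ f\in\mathcal{F}(U),\ U\in\mathcal{O}(X)\}$. A local section of a continuous $p:E\to Z$ over an open $V\subseteq Z$ is a continuous $s:V\to E$ with $p\circ s=\mathrm{id}_V$; $p$ is an étalé space if every $e\in E$ has an open neighbourhood $O$ with $p[O]$ open and $p\restriction O:O\to p[O]$ a homeomorphism. *)

theory Defs
  imports "HOL-Analysis.Analysis"
begin

definition Opens :: "'a topology \<Rightarrow> 'a set set" where
  "Opens X = {U. openin X U \<and> U \<noteq> {}}"

definition presheaf :: "'a topology \<Rightarrow> ('a set \<Rightarrow> 'b set) \<Rightarrow> ('a set \<Rightarrow> 'a set \<Rightarrow> 'b \<Rightarrow> 'b) \<Rightarrow> bool" where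
  "presheaf X Fs res \<longleftrightarrow>
     (\<forall>U\<in>Opens X. \<forall>f\<in>Fs U. res U U f = f) \<and>
     (\<forall>U\<in>Opens X. \<forall>V\<in>Opens X. V \<subseteq> U \<longrightarrow> (\<forall>f\<in>Fs U. res V U f \<in> Fs V)) \<and>
     (\<forall>U\<in>Opens X. \<forall>V\<in>Opens X. \<forall>W\<in>Opens X. W \<subseteq> V \<longrightarrow> V \<subseteq> U \<longrightarrow>
        (\<forall>f\<in>Fs U. res W V (res V U f) = res W U f))"

definition Reg :: "'a topology \<Rightarrow> 'a set \<Rightarrow> 'a set" where
  "Reg X U = X interior_of (X closure_of U)"

definition RO :: "'a topology \<Rightarrow> 'a set set" where
  "RO X = {U. openin X U \<and> Reg X U = U}"

text \<open>Ultrafilters on the boolean algebra RO(X) (meet = intersection,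
  complement = interior of set complement, top = topspace X, bottom = {}).\<close>
definition ultrafilter_RO :: "'a topology \<Rightarrow> 'a set set \<Rightarrow> bool" where
  "ultrafilter_RO X G \<longleftrightarrow>
     G \<subseteq> RO X \<and> topspace X \<in> G \<and> {} \<notin> G \<and>
     (\<forall>p q. p \<in> G \<longrightarrow> q \<in> RO X \<longrightarrow> p \<subseteq> q \<longrightarrow> q \<in> G) \<and>
     (\<forall>p q. p \<in> G \<longrightarrow> q \<in> G \<longrightarrow> p \<inter> q \<in> G) \<and>
     (\<forall>q\<in>RO X. q \<in> G \<or> X interior_of (topspace X - q) \<in> G)"

definition St :: "'a topology \<Rightarrow> 'a set set set" where
  "St X = {G. ultrafilter_RO X G}"

definition Nq :: "'a topology \<Rightarrow> 'a set \<Rightarrow> 'a set set set" where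
  "Nq X q = {G \<in> St X. q \<in> G}"

definition StoneTop :: "'a topology \<Rightarrow> 'a set set topology" where
  "StoneTop X = topology_generated_by {Nq X q | q. q \<in> RO X}"

definition Gbar :: "'a topology \<Rightarrow> 'a set set \<Rightarrow> 'a set set" where
  "Gbar X G = {U \<in> Opens X. Reg X U \<in> G}"

text \<open>Sections are represented together with their domain as pairs (U, f), f \<in> Fs U.\<close>
definition germ_eq :: "'a topology \<Rightarrow> ('a set \<Rightarrow> 'b set) \<Rightarrow> ('a set \<Rightarrow> 'a set \<Rightarrow> 'b \<Rightarrow> 'b)
     \<Rightarrow> 'a set set \<Rightarrow> 'a set \<times> 'b \<Rightarrow> 'a set \<times> 'b \<Rightarrow> bool" where
  "germ_eq X Fs res G uf vg \<longleftrightarrow>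
     (case uf of (Uf, f) \<Rightarrow> case vg of (Ug, g) \<Rightarrow>
       Uf \<in> Gbar X G \<and> f \<in> Fs Uf \<and> Ug \<in> Gbar X G \<and> g \<in> Fs Ug \<and>
       (\<exists>U\<in>Gbar X G. U \<subseteq> Uf \<inter> Ug \<and>
          (\<forall>W. openin X W \<and> W \<noteq> {} \<and> W \<subseteq> U \<longrightarrow>
             (\<exists>V. V \<in> Opens X \<and> V \<subseteq> Uf \<inter> Ug \<and> res V Uf f = res V Ug g \<and> V \<subseteq> W))))"

definition germ :: "'a topology \<Rightarrow> ('a set \<Rightarrow> 'b set) \<Rightarrow> ('a set \<Rightarrow> 'a set \<Rightarrow> 'b \<Rightarrow> 'b)
     \<Rightarrow> 'a set set \<Rightarrow> 'a set \<Rightarrow> 'b \<Rightarrow> ('a set \<times> 'b) set" where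
  "germ X Fs res G U f = {vg. germ_eq X Fs res G (U, f) vg}"

definition stalk :: "'a topology \<Rightarrow> ('a set \<Rightarrow> 'b set) \<Rightarrow> ('a set \<Rightarrow> 'a set \<Rightarrow> 'b \<Rightarrow> 'b)
     \<Rightarrow> 'a set set \<Rightarrow> ('a set \<times> 'b) set set" where
  "stalk X Fs res G = {germ X Fs res G U f | U f. U \<in> Gbar X G \<and> f \<in> Fs U}"

definition Lambda1 :: "'a topology \<Rightarrow> ('a set \<Rightarrow> 'b set) \<Rightarrow> ('a set \<Rightarrow> 'a set \<Rightarrow> 'b \<Rightarrow> 'b)
     \<Rightarrow> ('a set set \<times> ('a set \<times> 'b) set) set" where
  "Lambda1 X Fs res = {(G, c) | G c. G \<in> St X \<and> c \<in> stalk X Fs res G}"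

definition p1 :: "'a set set \<times> ('a set \<times> 'b) set \<Rightarrow> 'a set set" where
  "p1 = fst"

definition fdot :: "'a topology \<Rightarrow> ('a set \<Rightarrow> 'b set) \<Rightarrow> ('a set \<Rightarrow> 'a set \<Rightarrow> 'b \<Rightarrow> 'b)
     \<Rightarrow> 'a set \<Rightarrow> 'b \<Rightarrow> 'a set set \<Rightarrow> 'a set set \<times> ('a set \<times> 'b) set" where
  "fdot X Fs res U f = (\<lambda>G. (G, germ X Fs res G U f))"

definition B1 :: "'a topology \<Rightarrow> ('a set \<Rightarrow> 'b set) \<Rightarrow> ('a set \<Rightarrow> 'a set \<Rightarrow> 'b \<Rightarrow> 'b)
     \<Rightarrow> ('a set set \<times> ('a set \<times> 'b) set) set set" where
  "B1 X Fs res = {fdot X Fs res U f ` Nq X q | q U f.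
      q \<in> RO X \<and> q \<subseteq> Reg X U \<and> U \<in> Opens X \<and> f \<in> Fs U}"

definition tau1 :: "'a topology \<Rightarrow> ('a set \<Rightarrow> 'b set) \<Rightarrow> ('a set \<Rightarrow> 'a set \<Rightarrow> 'b \<Rightarrow> 'b)
     \<Rightarrow> ('a set set \<times> ('a set \<times> 'b) set) topology" where
  "tau1 X Fs res = topology_generated_by (B1 X Fs res)"

definition is_base :: "'c topology \<Rightarrow> 'c set set \<Rightarrow> bool" where
  "is_base T B \<longleftrightarrow> (\<forall>b\<in>B. openin T b) \<and>
     (\<forall>S. openin T S \<longrightarrow> (\<exists>C. C \<subseteq> B \<and> \<Union>C = S))"

definition zero_dimensional :: "'c topology \<Rightarrow> bool" where
  "zero_dimensional T \<longleftrightarrow> (\<exists>B. is_base T B \<and> (\<forall>b\<in>B. closedin T b))"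

definition local_section :: "'c topology \<Rightarrow> 'd topology \<Rightarrow> ('c \<Rightarrow> 'd) \<Rightarrow> 'd set \<Rightarrow> ('d \<Rightarrow> 'c) \<Rightarrow> bool" where
  "local_section E Z p V s \<longleftrightarrow> openin Z V \<and> continuous_map (subtopology Z V) E s \<and>
     (\<forall>z\<in>V. p (s z) = z)"

definition etale :: "'c topology \<Rightarrow> 'd topology \<Rightarrow> ('c \<Rightarrow> 'd) \<Rightarrow> bool" where
  "etale E Z p \<longleftrightarrow> continuous_map E Z p \<and>
     (\<forall>e\<in>topspace E. \<exists>W. openin E W \<and> e \<in> W \<and> openin Z (p ` W) \<and>
        homeomorphic_map (subtopology E W) (subtopology Z (p ` W)) p)"

end

theory Submission
  imports Defs
begin

(* Everything rests on one observation: two sections have the same germ at an ultrafilter G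
   iff the regularization of the largest open set on which they locally agree belongs to G.
   Hence germ equality is constant on a basic clopen set N_s around G, so the maps fdot U f
   are continuous sections of p1 and their images over the compact clopen sets N_q form a
   base; p1 maps each of them homeomorphically onto N_q.  Points over distinct ultrafilters
   are separated through p1, distinct germs over the same ultrafilter by basic sets on which
   the germs stay distinct; so the space is Hausdorff and the compact basic sets are clopen.
   A stalk is the fibre of p1 over a point, hence closed, and each basic set meets it in at
   most one point, so it is discrete; an infinite closed discrete subspace rules out
   compactness. *)

section \<open>Regular open sets\<close>

abbreviation RO_compl :: "'a topology \<Rightarrow> 'a set \<Rightarrow> 'a set" where
  "RO_compl X q \<equiv> X interior_of (topspace X - q)"

lemma openin_Reg [simp]: "openin X (Reg X U)"
  by (simp add: Reg_def)

lemma Reg_superset: "openin X U \<Longrightarrow> U \<subseteq> Reg X U"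
  unfolding Reg_def by (simp add: closure_of_subset interior_of_maximal openin_subset)

lemma Reg_mono: "U \<subseteq> V \<Longrightarrow> Reg X U \<subseteq> Reg X V"
  unfolding Reg_def by (simp add: closure_of_mono interior_of_mono)

lemma Reg_idem [simp]: "Reg X (Reg X U) = Reg X U"
proof
  have "X closure_of (Reg X U) \<subseteq> X closure_of U"
    unfolding Reg_def by (metis closure_of_closure_of closure_of_mono interior_of_subset)
  then show "Reg X (Reg X U) \<subseteq> Reg X U"
    by (simp add: Reg_def interior_of_mono)
qed (simp add: Reg_superset)

lemma Reg_in_RO [simp]: "Reg X U \<in> RO X"
  by (simp add: RO_def)

lemma Reg_empty [simp]: "Reg X {} = {}"
  by (simp add: Reg_def)

lemma RO_openin: "q \<in> RO X \<Longrightarrow> openin X q"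
  by (simp add: RO_def)

lemma Reg_Int_superset:
  assumes "openin X U" "openin X V"
  shows "Reg X U \<inter> Reg X V \<subseteq> Reg X (U \<inter> V)"
proof -
  let ?W = "Reg X U \<inter> Reg X V"
  have W: "openin X ?W" "?W \<subseteq> X closure_of U" "?W \<subseteq> X closure_of V"
    by (auto simp: Reg_def dest: subsetD[OF interior_of_subset])
  have "?W \<subseteq> X closure_of (?W \<inter> U)"
    using W openin_Int_closure_of_subset[OF W(1), of U] by blast
  also have "\<dots> \<subseteq> X closure_of (U \<inter> X closure_of V)"
    using W by (intro closure_of_mono) blast
  also have "\<dots> \<subseteq> X closure_of (U \<inter> V)"
    by (simp add: assms(1) closure_of_minimal openin_Int_closure_of_subset)
  finally show ?thesis
    unfolding Reg_def[of X "U \<inter> V"] using W(1) by (rule interior_of_maximal)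
qed

lemma RO_Int: "q \<in> RO X \<Longrightarrow> r \<in> RO X \<Longrightarrow> q \<inter> r \<in> RO X"
  using Reg_Int_superset[of X q r] Reg_mono[of "q \<inter> r" q X] Reg_mono[of "q \<inter> r" r X]
    Reg_superset[of X "q \<inter> r"]
  by (auto simp: RO_def)

lemma topspace_in_RO: "topspace X \<in> RO X"
  by (simp add: RO_def Reg_def)

lemma RO_compl_disjoint: "q \<inter> RO_compl X q = {}"
  using interior_of_subset[of X "topspace X - q"] by blast

lemma RO_compl_in_RO:
  assumes "openin X q"
  shows "RO_compl X q \<in> RO X"
proof -
  have "X closure_of (RO_compl X q) \<subseteq> topspace X - q"
    using openin_Int_closure_of_eq_empty[OF assms] closure_of_subset_topspace RO_compl_disjoint
    by fastforce
  then have "Reg X (RO_compl X q) \<subseteq> RO_compl X q"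
    unfolding Reg_def by (rule interior_of_mono)
  then show ?thesis
    using Reg_superset[of X "RO_compl X q"] by (auto simp: RO_def)
qed

lemma subset_closure_of_if_dense_below:
  assumes "openin X A" and dense: "\<And>W. openin X W \<Longrightarrow> W \<noteq> {} \<Longrightarrow> W \<subseteq> A \<Longrightarrow> W \<inter> S \<noteq> {}"
  shows "A \<subseteq> X closure_of S"
proof
  fix x assume "x \<in> A"
  then have "A \<inter> T \<inter> S \<noteq> {}" if "openin X T" "x \<in> T" for T
    using dense[of "A \<inter> T"] assms(1) that by blast
  then show "x \<in> X closure_of S"
    using \<open>x \<in> A\<close> openin_subset[OF assms(1)] by (auto simp: in_closure_of)
qed

section \<open>Ultrafilters of regular open sets\<close>

lemma
  assumes "G \<in> St X"
  shows St_subset_RO: "G \<subseteq> RO X"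
    and St_topspace: "topspace X \<in> G"
    and St_not_empty: "{} \<notin> G"
    and St_upclosed: "\<And>p q. p \<in> G \<Longrightarrow> q \<in> RO X \<Longrightarrow> p \<subseteq> q \<Longrightarrow> q \<in> G"
    and St_Int: "\<And>p q. p \<in> G \<Longrightarrow> q \<in> G \<Longrightarrow> p \<inter> q \<in> G"
    and St_RO_compl: "\<And>q. q \<in> RO X \<Longrightarrow> q \<notin> G \<Longrightarrow> RO_compl X q \<in> G"
  using assms by (auto simp: St_def ultrafilter_RO_def)

lemma St_RO_compl_notin: "G \<in> St X \<Longrightarrow> q \<in> G \<Longrightarrow> RO_compl X q \<notin> G"
  by (metis RO_compl_disjoint St_Int St_not_empty)

lemma St_maximal:
  assumes "G \<in> St X" "H \<in> St X" "H \<subseteq> G"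
  shows "H = G"
  by (metis assms St_RO_compl St_RO_compl_notin St_subset_RO subsetD subsetI subset_antisym)

lemma St_mem_locally_constant:
  assumes "G \<in> St X" "q \<in> RO X"
  obtains s where "s \<in> G" "\<And>H. H \<in> Nq X s \<Longrightarrow> q \<in> H \<longleftrightarrow> q \<in> G"
proof (cases "q \<in> G")
  case True
  show ?thesis
    by (rule that[of q]) (use True in \<open>auto simp: Nq_def\<close>)
next
  case False
  have "RO_compl X q \<in> G"
    by (rule St_RO_compl[OF assms False])
  moreover have "q \<notin> H" if "H \<in> Nq X (RO_compl X q)" for H
    using that St_RO_compl_notin by (auto simp: Nq_def)
  ultimately show ?thesis
    using False that by blast
qed

definition RO_fip :: "'a topology \<Rightarrow> 'a set set \<Rightarrow> bool" where
  "RO_fip X S \<longleftrightarrow> S \<subseteq> RO X \<and> (\<forall>T. finite T \<and> T \<subseteq> S \<longrightarrow> topspace X \<inter> \<Inter>T \<noteq> {})"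

lemma RO_fipD: "RO_fip X S \<Longrightarrow> finite T \<Longrightarrow> T \<subseteq> S \<Longrightarrow> topspace X \<inter> \<Inter>T \<noteq> {}"
  by (simp add: RO_fip_def)

lemma openin_topspace_Inter:
  "finite T \<Longrightarrow> (\<And>t. t \<in> T \<Longrightarrow> openin X t) \<Longrightarrow> openin X (topspace X \<inter> \<Inter>T)"
  by (cases "T = {}") (auto intro!: openin_Int openin_Inter)

lemma St_finite_Inter:
  assumes "G \<in> St X" "finite T" "T \<subseteq> G"
  shows "topspace X \<inter> \<Inter>T \<in> G"
  using assms(2,3)
proof (induction T rule: finite_induct)
  case empty
  then show ?case using St_topspace[OF assms(1)] by simp
next
  case (insert t T)
  then have "t \<inter> (topspace X \<inter> \<Inter>T) \<in> G"
    using St_Int[OF assms(1)] by simp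
  then show ?case by (simp add: Int_left_commute)
qed

lemma St_imp_RO_fip:
  assumes "G \<in> St X"
  shows "RO_fip X G"
  unfolding RO_fip_def
proof (intro conjI allI impI)
  show "G \<subseteq> RO X"
    by (rule St_subset_RO[OF assms])
  fix T assume "finite T \<and> T \<subseteq> G"
  then have "topspace X \<inter> \<Inter>T \<in> G"
    using St_finite_Inter[OF assms] by blast
  then show "topspace X \<inter> \<Inter>T \<noteq> {}"
    using St_not_empty[OF assms] by metis
qed

lemma RO_fip_insert:
  assumes "RO_fip X M" "a \<in> RO X" "finite T'" "T' \<subseteq> M" "topspace X \<inter> \<Inter>T' \<subseteq> a"
  shows "RO_fip X (insert a M)"
  unfolding RO_fip_def
proof (intro conjI allI impI)
  show "insert a M \<subseteq> RO X"
    using assms(1,2) by (simp add: RO_fip_def)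
  fix T assume T: "finite T \<and> T \<subseteq> insert a M"
  then have "finite (T - {a} \<union> T')" "T - {a} \<union> T' \<subseteq> M"
    using assms(3,4) by auto
  then have "topspace X \<inter> \<Inter>(T - {a} \<union> T') \<noteq> {}"
    using assms(1) RO_fip_def by metis
  moreover have "topspace X \<inter> \<Inter>(T - {a} \<union> T') \<subseteq> topspace X \<inter> \<Inter>T"
    using assms(5) by auto
  ultimately show "topspace X \<inter> \<Inter>T \<noteq> {}"
    by (metis subset_empty)
qed

lemma not_RO_fip_insert:
  assumes "\<not> RO_fip X (insert a M)" "M \<subseteq> RO X" "a \<in> RO X"
  obtains T where "finite T" "T \<subseteq> M" "topspace X \<inter> \<Inter>T \<inter> a = {}"
proof -
  have "insert a M \<subseteq> RO X"
    using assms(2,3) by simp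
  then obtain T where T: "finite T" "T \<subseteq> insert a M" "topspace X \<inter> \<Inter>T = {}"
    using assms(1) unfolding RO_fip_def by auto
  have "topspace X \<inter> \<Inter>(T - {a}) \<inter> a \<subseteq> topspace X \<inter> \<Inter>T"
    by auto
  with T show thesis
    by (intro that[of "T - {a}"]) (auto simp: subset_empty)
qed

text \<open>If neither extension works, some finite intersection \<open>A\<close> of members misses both \<open>q\<close>
  and its complement; being open and disjoint from \<open>q\<close>, \<open>A\<close> lies in the complement, so
  \<open>A = {}\<close>.\<close>

lemma RO_fip_insert_or_RO_compl:
  assumes fip: "RO_fip X M" and q: "q \<in> RO X"
  shows "RO_fip X (insert q M) \<or> RO_fip X (insert (RO_compl X q) M)"
proof (rule ccontr)
  have M: "M \<subseteq> RO X"
    using fip by (simp add: RO_fip_def)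
  have compl: "RO_compl X q \<in> RO X"
    using q RO_openin RO_compl_in_RO by blast
  assume "\<not> (RO_fip X (insert q M) \<or> RO_fip X (insert (RO_compl X q) M))"
  then obtain T1 T2 where
    T1: "finite T1" "T1 \<subseteq> M" "topspace X \<inter> \<Inter>T1 \<inter> q = {}" and
    T2: "finite T2" "T2 \<subseteq> M" "topspace X \<inter> \<Inter>T2 \<inter> RO_compl X q = {}"
    using not_RO_fip_insert[OF _ M q] not_RO_fip_insert[OF _ M compl] by metis
  let ?A = "topspace X \<inter> \<Inter>(T1 \<union> T2)"
  have "?A \<subseteq> topspace X - q"
    using T1(3) by auto
  moreover have "openin X ?A"
    using T1 T2 M by (intro openin_topspace_Inter) (auto intro: RO_openin)
  ultimately have "?A \<subseteq> RO_compl X q"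
    by (rule interior_of_maximal)
  then have "?A = {}"
    using T2(3) by auto
  moreover have "finite (T1 \<union> T2)" "T1 \<union> T2 \<subseteq> M"
    using T1 T2 by auto
  ultimately show False
    using fip unfolding RO_fip_def by metis
qed

lemma maximal_RO_fip_in_St:
  assumes fip: "RO_fip X M" and max: "\<And>a. a \<in> RO X \<Longrightarrow> RO_fip X (insert a M) \<Longrightarrow> a \<in> M"
  shows "M \<in> St X"
  unfolding St_def ultrafilter_RO_def
proof (intro CollectI conjI allI impI ballI)
  show M: "M \<subseteq> RO X"
    using fip by (simp add: RO_fip_def)
  show "topspace X \<in> M"
    by (rule max[OF topspace_in_RO RO_fip_insert[OF fip topspace_in_RO, of "{}"]]) auto
  show "{} \<notin> M"
  proof
    assume "{} \<in> M"
    then have "topspace X \<inter> \<Inter>{{}} \<noteq> {}"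
      using fip unfolding RO_fip_def by (metis empty_subsetI finite.emptyI finite.insertI insert_subset)
    then show False
      by simp
  qed
  fix p q
  show "q \<in> M" if "p \<in> M" "q \<in> RO X" "p \<subseteq> q"
    by (rule max[OF that(2) RO_fip_insert[OF fip that(2), of "{p}"]]) (use that in auto)
  show "p \<inter> q \<in> M" if "p \<in> M" "q \<in> M"
  proof -
    have pq: "p \<inter> q \<in> RO X"
      using that M RO_Int by blast
    show ?thesis
      by (rule max[OF pq RO_fip_insert[OF fip pq, where T'="{p, q}"]]) (use that in auto)
  qed
next
  fix q assume q: "q \<in> RO X"
  then have "RO_compl X q \<in> RO X"
    using RO_openin RO_compl_in_RO by blast
  then show "q \<in> M \<or> RO_compl X q \<in> M"
    using RO_fip_insert_or_RO_compl[OF fip q] max q by blast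
qed

lemma RO_fip_Union_chain:
  assumes C: "C \<noteq> {}" "subset.chain A C" and fip: "\<And>M. M \<in> C \<Longrightarrow> RO_fip X M"
  shows "RO_fip X (\<Union>C)"
  unfolding RO_fip_def
proof (intro conjI allI impI)
  show "\<Union>C \<subseteq> RO X"
    using fip by (force simp: RO_fip_def)
  fix T assume T: "finite T \<and> T \<subseteq> \<Union>C"
  then obtain M where "M \<in> C" "T \<subseteq> M"
    using finite_subset_Union_chain[OF _ _ C] by metis
  then show "topspace X \<inter> \<Inter>T \<noteq> {}"
    using fip T unfolding RO_fip_def by metis
qed

lemma RO_fip_extends_to_St:
  assumes "RO_fip X S"
  obtains G where "G \<in> St X" "S \<subseteq> G"
proof -
  let ?A = "{M. S \<subseteq> M \<and> RO_fip X M}"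
  have "\<exists>M\<in>?A. \<forall>N\<in>?A. M \<subseteq> N \<longrightarrow> N = M"
  proof (rule subset_Zorn_nonempty)
    show "?A \<noteq> {}"
      using assms by blast
    fix C assume C: "C \<noteq> {}" "subset.chain ?A C"
    then have CS: "\<And>M. M \<in> C \<Longrightarrow> S \<subseteq> M" and CF: "\<And>M. M \<in> C \<Longrightarrow> RO_fip X M"
      by (auto simp: subset_chain_def)
    have "RO_fip X (\<Union>C)"
      by (rule RO_fip_Union_chain[OF C CF])
    moreover have "S \<subseteq> \<Union>C"
      using C(1) CS by blast
    ultimately show "\<Union>C \<in> ?A"
      by simp
  qed
  then obtain M where "M \<in> ?A" and max: "\<And>N. N \<in> ?A \<Longrightarrow> M \<subseteq> N \<Longrightarrow> N = M"
    by auto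
  then have M: "S \<subseteq> M" "RO_fip X M"
    by simp_all
  have "M \<in> St X"
  proof (rule maximal_RO_fip_in_St[OF M(2)])
    fix a assume "RO_fip X (insert a M)"
    then have "insert a M = M"
      using M(1) max[of "insert a M"] by blast
    then show "a \<in> M"
      by blast
  qed
  then show thesis
    using M(1) by (rule that)
qed

section \<open>The Stone space of regular open sets\<close>

definition base_Int_property :: "'c set set \<Rightarrow> bool" where
  "base_Int_property B \<longleftrightarrow> (\<forall>b1\<in>B. \<forall>b2\<in>B. \<forall>x\<in>b1 \<inter> b2. \<exists>b\<in>B. x \<in> b \<and> b \<subseteq> b1 \<inter> b2)"

lemma generate_topology_on_base_neighbourhood:
  assumes "base_Int_property B" "generate_topology_on B S"
  shows "\<forall>x\<in>S. \<exists>b\<in>B. x \<in> b \<and> b \<subseteq> S"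
  using assms(2)
proof (induction rule: generate_topology_on.induct)
  case (Int S1 S2)
  show ?case
  proof
    fix x assume "x \<in> S1 \<inter> S2"
    then obtain b1 b2 where b: "b1 \<in> B" "x \<in> b1" "b1 \<subseteq> S1" "b2 \<in> B" "x \<in> b2" "b2 \<subseteq> S2"
      using Int.IH by blast
    then obtain b where "b \<in> B" "x \<in> b" "b \<subseteq> b1 \<inter> b2"
      using assms(1) unfolding base_Int_property_def by blast
    then show "\<exists>b\<in>B. x \<in> b \<and> b \<subseteq> S1 \<inter> S2"
      using b by blast
  qed
next
  case (UN K)
  show ?case
  proof
    fix x assume "x \<in> \<Union>K"
    then obtain k where k: "k \<in> K" "x \<in> k"
      by blast
    then obtain b where "b \<in> B" "x \<in> b" "b \<subseteq> k"
      using UN.IH by blast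
    then show "\<exists>b\<in>B. x \<in> b \<and> b \<subseteq> \<Union>K"
      using k by blast
  qed
qed blast+

lemma openin_topology_generated_by_base_iff:
  assumes "base_Int_property B"
  shows "openin (topology_generated_by B) S \<longleftrightarrow> (\<forall>x\<in>S. \<exists>b\<in>B. x \<in> b \<and> b \<subseteq> S)"
proof
  assume "openin (topology_generated_by B) S"
  then show "\<forall>x\<in>S. \<exists>b\<in>B. x \<in> b \<and> b \<subseteq> S"
    using generate_topology_on_base_neighbourhood[OF assms] openin_topology_generated_by by blast
next
  assume "\<forall>x\<in>S. \<exists>b\<in>B. x \<in> b \<and> b \<subseteq> S"
  then have "S = \<Union>{b\<in>B. b \<subseteq> S}"
    by blast
  moreover have "openin (topology_generated_by B) (\<Union>{b\<in>B. b \<subseteq> S})"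
    by (intro openin_Union) (simp add: topology_generated_by_Basis)
  ultimately show "openin (topology_generated_by B) S"
    by simp
qed

lemma is_base_topology_generated_by:
  assumes "base_Int_property B"
  shows "is_base (topology_generated_by B) B"
  unfolding is_base_def
proof (intro conjI ballI allI impI)
  fix b assume "b \<in> B"
  then show "openin (topology_generated_by B) b"
    by (rule topology_generated_by_Basis)
next
  fix S assume "openin (topology_generated_by B) S"
  then have "\<forall>x\<in>S. \<exists>b\<in>B. x \<in> b \<and> b \<subseteq> S"
    unfolding openin_topology_generated_by_base_iff[OF assms] .
  then show "\<exists>C\<subseteq>B. \<Union>C = S"
    by (intro exI[of _ "{b\<in>B. b \<subseteq> S}"]) blast
qed

lemma Nq_subset_St: "Nq X q \<subseteq> St X"
  by (auto simp: Nq_def)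

lemma Nq_mono: "t \<subseteq> q \<Longrightarrow> q \<in> RO X \<Longrightarrow> Nq X t \<subseteq> Nq X q"
  unfolding Nq_def using St_upclosed by blast

lemma Nq_Int:
  assumes "q \<in> RO X" "r \<in> RO X"
  shows "Nq X (q \<inter> r) = Nq X q \<inter> Nq X r"
proof
  show "Nq X (q \<inter> r) \<subseteq> Nq X q \<inter> Nq X r"
    using Nq_mono[of "q \<inter> r" q X] Nq_mono[of "q \<inter> r" r X] assms by blast
  show "Nq X q \<inter> Nq X r \<subseteq> Nq X (q \<inter> r)"
    unfolding Nq_def using St_Int by blast
qed

lemma base_Int_property_Nq: "base_Int_property {Nq X q | q. q \<in> RO X}"
  unfolding base_Int_property_def
proof (intro ballI)
  fix b1 b2 G assume "b1 \<in> {Nq X q | q. q \<in> RO X}" "b2 \<in> {Nq X q | q. q \<in> RO X}"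
    and G: "G \<in> b1 \<inter> b2"
  then obtain q r where "q \<in> RO X" "r \<in> RO X" "b1 = Nq X q" "b2 = Nq X r"
    by blast
  then have "q \<inter> r \<in> RO X" "b1 \<inter> b2 = Nq X (q \<inter> r)"
    by (simp_all add: RO_Int Nq_Int)
  then show "\<exists>b\<in>{Nq X q | q. q \<in> RO X}. G \<in> b \<and> b \<subseteq> b1 \<inter> b2"
    using G by auto
qed

lemma openin_StoneTop_iff:
  "openin (StoneTop X) S \<longleftrightarrow> (\<forall>G\<in>S. \<exists>q\<in>RO X. G \<in> Nq X q \<and> Nq X q \<subseteq> S)"
  unfolding StoneTop_def openin_topology_generated_by_base_iff[OF base_Int_property_Nq]
  by (intro ball_cong refl) blast

lemma openin_StoneTop_Nq: "q \<in> RO X \<Longrightarrow> openin (StoneTop X) (Nq X q)"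
  unfolding openin_StoneTop_iff by blast

lemma topspace_StoneTop: "topspace (StoneTop X) = St X"
proof -
  have "topspace (StoneTop X) = \<Union>{Nq X q | q. q \<in> RO X}"
    by (simp add: StoneTop_def)
  also have "\<dots> = St X"
  proof
    show "\<Union>{Nq X q | q. q \<in> RO X} \<subseteq> St X"
      using Nq_subset_St by blast
    have "St X \<subseteq> Nq X (topspace X)"
      using St_topspace by (auto simp: Nq_def)
    then show "St X \<subseteq> \<Union>{Nq X q | q. q \<in> RO X}"
      using topspace_in_RO by blast
  qed
  finally show ?thesis .
qed

lemma disjnt_Nq_RO_compl: "disjnt (Nq X q) (Nq X (RO_compl X q))"
  unfolding disjnt_def Nq_def using St_RO_compl_notin by blast

lemma Hausdorff_StoneTop: "Hausdorff_space (StoneTop X)"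
  unfolding Hausdorff_space_def topspace_StoneTop
proof (intro allI impI, elim conjE)
  fix G H assume G: "G \<in> St X" and H: "H \<in> St X" and "G \<noteq> H"
  then obtain q where q: "q \<in> H" "q \<notin> G"
    using St_maximal by blast
  then have "q \<in> RO X"
    using St_subset_RO H by blast
  then have "G \<in> Nq X (RO_compl X q)" "H \<in> Nq X q"
    using q G H St_RO_compl by (auto simp: Nq_def)
  moreover have "openin (StoneTop X) (Nq X (RO_compl X q))" "openin (StoneTop X) (Nq X q)"
    using \<open>q \<in> RO X\<close> RO_openin RO_compl_in_RO openin_StoneTop_Nq by blast+
  ultimately show "\<exists>U V. openin (StoneTop X) U \<and> openin (StoneTop X) V \<and> G \<in> U \<and> H \<in> V \<and> disjnt U V"
    using disjnt_Nq_RO_compl disjnt_sym by metis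
qed

lemma RO_fip_insert_RO_compl_image:
  assumes q0: "q0 \<in> RO X" and R: "R \<subseteq> RO X"
    and no_subcover: "\<And>R'. finite R' \<Longrightarrow> R' \<subseteq> R \<Longrightarrow> \<not> Nq X q0 \<subseteq> \<Union>(Nq X ` R')"
  shows "RO_fip X (insert q0 (RO_compl X ` R))"
  unfolding RO_fip_def
proof (intro conjI allI impI)
  show "insert q0 (RO_compl X ` R) \<subseteq> RO X"
    using q0 R by (auto intro: RO_compl_in_RO RO_openin)
  fix T assume T: "finite T \<and> T \<subseteq> insert q0 (RO_compl X ` R)"
  then have "finite (T - {q0})" "T - {q0} \<subseteq> RO_compl X ` R"
    by auto
  then obtain R' where R': "R' \<subseteq> R" "finite R'" "T - {q0} = RO_compl X ` R'"
    using finite_subset_image by metis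
  then obtain G where G: "G \<in> Nq X q0" "G \<notin> \<Union>(Nq X ` R')"
    using no_subcover by blast
  then have St: "G \<in> St X" and "q0 \<in> G"
    by (simp_all add: Nq_def)
  have compl: "RO_compl X r \<in> G" if "r \<in> R'" for r
  proof (rule St_RO_compl[OF St])
    show "r \<in> RO X"
      using that R'(1) R by blast
    show "r \<notin> G"
      using G(2) that St by (auto simp: Nq_def)
  qed
  have "T \<subseteq> insert q0 (T - {q0})"
    by blast
  also have "\<dots> \<subseteq> G"
    unfolding R'(3) using \<open>q0 \<in> G\<close> compl by blast
  finally have "T \<subseteq> G" .
  then show "topspace X \<inter> \<Inter>T \<noteq> {}"
    using T by (intro RO_fipD[OF St_imp_RO_fip[OF St]]) auto
qed

text \<open>Compactness of the basic clopen sets is the Stone duality argument: an uncovered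
  neighbourhood would make \<open>q\<^sub>0\<close> together with the complements of the covering sets a
  family with the finite intersection property, and any ultrafilter containing it
  escapes the cover.\<close>

lemma Nq_finite_subcover:
  assumes q0: "q0 \<in> RO X" and R: "R \<subseteq> RO X" and cover: "Nq X q0 \<subseteq> \<Union>(Nq X ` R)"
  obtains R' where "finite R'" "R' \<subseteq> R" "Nq X q0 \<subseteq> \<Union>(Nq X ` R')"
proof (rule ccontr)
  assume "\<not> thesis"
  then have "RO_fip X (insert q0 (RO_compl X ` R))"
    using that by (intro RO_fip_insert_RO_compl_image[OF q0 R]) blast
  then obtain G where G: "G \<in> St X" "insert q0 (RO_compl X ` R) \<subseteq> G"
    by (rule RO_fip_extends_to_St)
  then have "G \<in> Nq X q0"
    by (simp add: Nq_def)
  then obtain r where "r \<in> R" "G \<in> Nq X r"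
    using cover by blast
  then have "r \<in> G" "RO_compl X r \<in> G"
    using G(2) by (auto simp: Nq_def)
  then show False
    using St_RO_compl_notin[OF G(1)] by blast
qed

lemma compactin_StoneTop_Nq:
  assumes q0: "q0 \<in> RO X"
  shows "compactin (StoneTop X) (Nq X q0)"
  unfolding compactin_def topspace_StoneTop
proof (intro conjI allI impI Nq_subset_St)
  fix \<U> assume \<U>: "(\<forall>u\<in>\<U>. openin (StoneTop X) u) \<and> Nq X q0 \<subseteq> \<Union>\<U>"
  define R where "R = {r\<in>RO X. \<exists>u\<in>\<U>. Nq X r \<subseteq> u}"
  have "R \<subseteq> RO X"
    unfolding R_def by blast
  moreover have "Nq X q0 \<subseteq> \<Union>(Nq X ` R)"
  proof
    fix G assume "G \<in> Nq X q0"
    then obtain u where "u \<in> \<U>" "G \<in> u"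
      using \<U> by blast
    moreover have "openin (StoneTop X) u"
      using \<U> \<open>u \<in> \<U>\<close> by blast
    ultimately obtain r where "r \<in> RO X" "G \<in> Nq X r" "Nq X r \<subseteq> u"
      unfolding openin_StoneTop_iff by blast
    then show "G \<in> \<Union>(Nq X ` R)"
      using \<open>u \<in> \<U>\<close> unfolding R_def by blast
  qed
  ultimately obtain R' where R': "finite R'" "R' \<subseteq> R" "Nq X q0 \<subseteq> \<Union>(Nq X ` R')"
    by (rule Nq_finite_subcover[OF q0])
  have "\<forall>r\<in>R'. \<exists>u. u \<in> \<U> \<and> Nq X r \<subseteq> u"
    using R'(2) unfolding R_def by blast
  then obtain u where u: "\<forall>r\<in>R'. u r \<in> \<U> \<and> Nq X r \<subseteq> u r"
    by metis
  show "\<exists>\<F>. finite \<F> \<and> \<F> \<subseteq> \<U> \<and> Nq X q0 \<subseteq> \<Union>\<F>"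
  proof (intro exI conjI)
    show "finite (u ` R')" "u ` R' \<subseteq> \<U>" "Nq X q0 \<subseteq> \<Union>(u ` R')"
      using R' u by blast+
  qed
qed

section \<open>Germs at points of the Stone space\<close>

definition agreement_set ::
  "'a topology \<Rightarrow> ('a set \<Rightarrow> 'a set \<Rightarrow> 'b \<Rightarrow> 'b) \<Rightarrow> 'a set \<Rightarrow> 'b \<Rightarrow> 'a set \<Rightarrow> 'b \<Rightarrow> 'a set" where
  "agreement_set X res U f V g = \<Union>{W \<in> Opens X. W \<subseteq> U \<inter> V \<and> res W U f = res W V g}"

lemma openin_agreement_set: "openin X (agreement_set X res U f V g)"
  unfolding agreement_set_def Opens_def by (intro openin_Union) simp

lemma agreement_set_subset: "agreement_set X res U f V g \<subseteq> U \<inter> V"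
  unfolding agreement_set_def by blast

lemma agreement_set_sym: "agreement_set X res U f V g = agreement_set X res V g U f"
  unfolding agreement_set_def by (metis Int_commute)

lemma agreement_set_refl: "U \<in> Opens X \<Longrightarrow> agreement_set X res U f U f = U"
  unfolding agreement_set_def by blast

lemma in_Gbar_iff: "G \<in> St X \<Longrightarrow> U \<in> Gbar X G \<longleftrightarrow> openin X U \<and> Reg X U \<in> G"
  unfolding Gbar_def Opens_def using St_not_empty by fastforce

definition agree_densely_below ::
  "'a topology \<Rightarrow> ('a set \<Rightarrow> 'a set \<Rightarrow> 'b \<Rightarrow> 'b) \<Rightarrow> 'a set \<Rightarrow> 'a set \<Rightarrow> 'b \<Rightarrow> 'a set \<Rightarrow> 'b \<Rightarrow> bool" where
  "agree_densely_below X res A U f V g \<longleftrightarrow> (\<forall>W. openin X W \<and> W \<noteq> {} \<and> W \<subseteq> A \<longrightarrow>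
     (\<exists>W'. W' \<in> Opens X \<and> W' \<subseteq> U \<inter> V \<and> res W' U f = res W' V g \<and> W' \<subseteq> W))"

lemma germ_eq_iff_agree_densely_below:
  "germ_eq X Fs res G (U, f) (V, g) \<longleftrightarrow> U \<in> Gbar X G \<and> f \<in> Fs U \<and> V \<in> Gbar X G \<and> g \<in> Fs V \<and>
     (\<exists>A\<in>Gbar X G. A \<subseteq> U \<inter> V \<and> agree_densely_below X res A U f V g)"
  by (simp add: germ_eq_def agree_densely_below_def)

lemma agree_densely_below_meets_agreement_set:
  assumes "agree_densely_below X res A U f V g" "openin X W" "W \<noteq> {}" "W \<subseteq> A"
  shows "W \<inter> agreement_set X res U f V g \<noteq> {}"
proof -
  have "\<exists>W'. W' \<in> Opens X \<and> W' \<subseteq> U \<inter> V \<and> res W' U f = res W' V g \<and> W' \<subseteq> W"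
    using assms by (simp add: agree_densely_below_def)
  then obtain W' where W': "W' \<in> Opens X" "W' \<subseteq> U \<inter> V" "res W' U f = res W' V g" "W' \<subseteq> W"
    by blast
  then have "W' \<subseteq> agreement_set X res U f V g"
    unfolding agreement_set_def by (intro Union_upper) simp
  moreover have "W' \<noteq> {}"
    using W'(1) by (simp add: Opens_def)
  ultimately show ?thesis
    using W'(4) by blast
qed

lemma germ_eq_imp_Reg_agreement_set:
  assumes G: "G \<in> St X" and eq: "germ_eq X Fs res G (U, f) (V, g)"
  shows "Reg X (agreement_set X res U f V g) \<in> G"
proof -
  let ?D = "agreement_set X res U f V g"
  obtain A where A: "A \<in> Gbar X G" "agree_densely_below X res A U f V g"
    using eq unfolding germ_eq_iff_agree_densely_below by blast
  then have oA: "openin X A" and RA: "Reg X A \<in> G"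
    by (simp_all add: in_Gbar_iff[OF G])
  have "A \<subseteq> X closure_of ?D"
    using agree_densely_below_meets_agreement_set[OF A(2)] by (rule subset_closure_of_if_dense_below[OF oA])
  then have "A \<subseteq> Reg X ?D"
    unfolding Reg_def using oA by (rule interior_of_maximal)
  then have "Reg X A \<subseteq> Reg X ?D"
    using Reg_mono[of A "Reg X ?D" X] by simp
  then show ?thesis
    using St_upclosed[OF G RA] by simp
qed

locale presheaf_on =
  fixes X :: "'a topology" and Fs :: "'a set \<Rightarrow> 'b set" and res :: "'a set \<Rightarrow> 'a set \<Rightarrow> 'b \<Rightarrow> 'b"
  assumes presheaf: "presheaf X Fs res"
begin

lemma res_res:
  assumes "U \<in> Opens X" "V \<in> Opens X" "W \<in> Opens X" "W \<subseteq> V" "V \<subseteq> U" "f \<in> Fs U"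
  shows "res W V (res V U f) = res W U f"
proof -
  have "\<forall>U\<in>Opens X. \<forall>V\<in>Opens X. \<forall>W\<in>Opens X. W \<subseteq> V \<longrightarrow> V \<subseteq> U \<longrightarrow>
      (\<forall>f\<in>Fs U. res W V (res V U f) = res W U f)"
    using presheaf unfolding presheaf_def by (elim conjE)
  then show ?thesis
    using assms by blast
qed

lemma res_agree_subset:
  assumes "U \<in> Opens X" "V \<in> Opens X" "f \<in> Fs U" "g \<in> Fs V"
    and "W \<in> Opens X" "W \<subseteq> U \<inter> V" "res W U f = res W V g" "W' \<in> Opens X" "W' \<subseteq> W"
  shows "res W' U f = res W' V g"
proof -
  have "W \<subseteq> U" "W \<subseteq> V"
    using assms(6) by auto
  have "res W' U f = res W' W (res W U f)"
    using res_res[OF assms(1,5,8,9) \<open>W \<subseteq> U\<close> assms(3)] by simp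
  also have "\<dots> = res W' W (res W V g)"
    using assms(7) by simp
  also have "\<dots> = res W' V g"
    using res_res[OF assms(2,5,8,9) \<open>W \<subseteq> V\<close> assms(4)] by simp
  finally show ?thesis .
qed

lemma agreement_set_trans:
  assumes "U1 \<in> Opens X" "U2 \<in> Opens X" "U3 \<in> Opens X" "f1 \<in> Fs U1" "f2 \<in> Fs U2" "f3 \<in> Fs U3"
  shows "agreement_set X res U1 f1 U2 f2 \<inter> agreement_set X res U2 f2 U3 f3
    \<subseteq> agreement_set X res U1 f1 U3 f3"
proof
  fix x assume "x \<in> agreement_set X res U1 f1 U2 f2 \<inter> agreement_set X res U2 f2 U3 f3"
  then obtain W1 W2 where
    W1: "W1 \<in> Opens X" "W1 \<subseteq> U1 \<inter> U2" "res W1 U1 f1 = res W1 U2 f2" "x \<in> W1" and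
    W2: "W2 \<in> Opens X" "W2 \<subseteq> U2 \<inter> U3" "res W2 U2 f2 = res W2 U3 f3" "x \<in> W2"
    unfolding agreement_set_def by blast
  have W: "W1 \<inter> W2 \<in> Opens X"
    using W1 W2 by (auto simp: Opens_def)
  have "res (W1 \<inter> W2) U1 f1 = res (W1 \<inter> W2) U2 f2"
    by (rule res_agree_subset[OF assms(1,2,4,5) W1(1-3) W]) blast
  also have "\<dots> = res (W1 \<inter> W2) U3 f3"
    by (rule res_agree_subset[OF assms(2,3,5,6) W2(1-3) W]) blast
  finally show "x \<in> agreement_set X res U1 f1 U3 f3"
    unfolding agreement_set_def using W W1 W2 by blast
qed

lemma agree_densely_below_agreement_set:
  assumes U: "U \<in> Opens X" "f \<in> Fs U" and V: "V \<in> Opens X" "g \<in> Fs V"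
  shows "agree_densely_below X res (agreement_set X res U f V g) U f V g"
  unfolding agree_densely_below_def
proof (intro allI impI)
  let ?D = "agreement_set X res U f V g"
  fix W assume W: "openin X W \<and> W \<noteq> {} \<and> W \<subseteq> ?D"
  then obtain x where "x \<in> W" "x \<in> ?D"
    by blast
  obtain W1 where "W1 \<in> {W \<in> Opens X. W \<subseteq> U \<inter> V \<and> res W U f = res W V g}" "x \<in> W1"
    using \<open>x \<in> ?D\<close> unfolding agreement_set_def by (rule UnionE)
  then have W1: "W1 \<in> Opens X" "W1 \<subseteq> U \<inter> V" "res W1 U f = res W1 V g" "x \<in> W1"
    by simp_all
  have W': "W \<inter> W1 \<in> Opens X"
    using W W1(1,4) \<open>x \<in> W\<close> by (auto simp: Opens_def)
  show "\<exists>W'. W' \<in> Opens X \<and> W' \<subseteq> U \<inter> V \<and> res W' U f = res W' V g \<and> W' \<subseteq> W"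
  proof (intro exI conjI)
    show "res (W \<inter> W1) U f = res (W \<inter> W1) V g"
      by (rule res_agree_subset[OF U(1) V(1) U(2) V(2) W1(1-3) W']) blast
  qed (use W' W1(2) in auto)
qed

lemma germ_eq_if_Reg_agreement_set:
  assumes G: "G \<in> St X" and U: "U \<in> Opens X" "f \<in> Fs U" and V: "V \<in> Opens X" "g \<in> Fs V"
    and RD: "Reg X (agreement_set X res U f V g) \<in> G"
  shows "germ_eq X Fs res G (U, f) (V, g)"
proof -
  let ?D = "agreement_set X res U f V g"
  have D: "?D \<in> Gbar X G"
    using RD openin_agreement_set by (simp add: in_Gbar_iff[OF G])
  have "?D \<subseteq> U" "?D \<subseteq> V"
    using agreement_set_subset by fast+
  then have "Reg X ?D \<subseteq> Reg X U" "Reg X ?D \<subseteq> Reg X V"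
    by (simp_all add: Reg_mono)
  then have "Reg X U \<in> G" "Reg X V \<in> G"
    using St_upclosed[OF G RD] by simp_all
  then have UV: "U \<in> Gbar X G" "V \<in> Gbar X G"
    using U(1) V(1) by (simp_all add: in_Gbar_iff[OF G] Opens_def)
  show ?thesis
    unfolding germ_eq_iff_agree_densely_below
    using U(2) V(2) UV D agreement_set_subset[of X res U f V g] agree_densely_below_agreement_set[OF U V]
    by blast
qed

lemma germ_eq_iff_Reg_agreement_set:
  assumes G: "G \<in> St X"
  shows "germ_eq X Fs res G (U, f) (V, g) \<longleftrightarrow>
    U \<in> Opens X \<and> f \<in> Fs U \<and> V \<in> Opens X \<and> g \<in> Fs V \<and> Reg X (agreement_set X res U f V g) \<in> G"
proof
  assume eq: "germ_eq X Fs res G (U, f) (V, g)"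
  then have "U \<in> Gbar X G" "f \<in> Fs U" "V \<in> Gbar X G" "g \<in> Fs V"
    unfolding germ_eq_def by auto
  with germ_eq_imp_Reg_agreement_set[OF G eq]
  show "U \<in> Opens X \<and> f \<in> Fs U \<and> V \<in> Opens X \<and> g \<in> Fs V \<and> Reg X (agreement_set X res U f V g) \<in> G"
    by (simp add: Gbar_def)
next
  assume "U \<in> Opens X \<and> f \<in> Fs U \<and> V \<in> Opens X \<and> g \<in> Fs V \<and> Reg X (agreement_set X res U f V g) \<in> G"
  then show "germ_eq X Fs res G (U, f) (V, g)"
    using germ_eq_if_Reg_agreement_set[OF G] by simp
qed

lemma germ_eq_refl: "G \<in> St X \<Longrightarrow> U \<in> Gbar X G \<Longrightarrow> f \<in> Fs U \<Longrightarrow> germ_eq X Fs res G (U, f) (U, f)"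
  by (simp add: germ_eq_iff_Reg_agreement_set agreement_set_refl Gbar_def)

lemma germ_eq_sym:
  "G \<in> St X \<Longrightarrow> germ_eq X Fs res G (U, f) (V, g) \<Longrightarrow> germ_eq X Fs res G (V, g) (U, f)"
  by (simp add: germ_eq_iff_Reg_agreement_set agreement_set_sym)

lemma germ_eq_trans:
  assumes G: "G \<in> St X"
    and "germ_eq X Fs res G (U1, f1) (U2, f2)" "germ_eq X Fs res G (U2, f2) (U3, f3)"
  shows "germ_eq X Fs res G (U1, f1) (U3, f3)"
proof -
  let ?D12 = "agreement_set X res U1 f1 U2 f2" and ?D23 = "agreement_set X res U2 f2 U3 f3"
  have U: "U1 \<in> Opens X" "U2 \<in> Opens X" "U3 \<in> Opens X" "f1 \<in> Fs U1" "f2 \<in> Fs U2" "f3 \<in> Fs U3"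
    and R: "Reg X ?D12 \<in> G" "Reg X ?D23 \<in> G"
    using assms by (simp_all add: germ_eq_iff_Reg_agreement_set)
  have "Reg X ?D12 \<inter> Reg X ?D23 \<subseteq> Reg X (?D12 \<inter> ?D23)"
    by (simp add: Reg_Int_superset openin_agreement_set)
  also have "\<dots> \<subseteq> Reg X (agreement_set X res U1 f1 U3 f3)"
    by (rule Reg_mono[OF agreement_set_trans[OF U]])
  finally have "Reg X (agreement_set X res U1 f1 U3 f3) \<in> G"
    using St_upclosed[OF G St_Int[OF G R]] by simp
  then show ?thesis
    using G U by (simp add: germ_eq_iff_Reg_agreement_set)
qed

lemma germ_eq_locally_constant:
  assumes G: "G \<in> St X"
  obtains s where "s \<in> G"
    "\<And>H. H \<in> Nq X s \<Longrightarrow> germ_eq X Fs res H (U, f) (V, g) \<longleftrightarrow> germ_eq X Fs res G (U, f) (V, g)"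
proof -
  obtain s where "s \<in> G"
    and s: "\<And>H. H \<in> Nq X s \<Longrightarrow>
      Reg X (agreement_set X res U f V g) \<in> H \<longleftrightarrow> Reg X (agreement_set X res U f V g) \<in> G"
    using St_mem_locally_constant[OF G Reg_in_RO] by blast
  have "germ_eq X Fs res H (U, f) (V, g) \<longleftrightarrow> germ_eq X Fs res G (U, f) (V, g)" if "H \<in> Nq X s" for H
    using s[OF that] that G by (simp add: germ_eq_iff_Reg_agreement_set Nq_def)
  with \<open>s \<in> G\<close> show thesis
    by (rule that)
qed

lemma same_germ_iff:
  assumes G: "G \<in> St X" and V: "V \<in> Gbar X G" "g \<in> Fs V"
  shows "germ X Fs res G U f = germ X Fs res G V g \<longleftrightarrow> germ_eq X Fs res G (U, f) (V, g)"
proof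
  assume "germ X Fs res G U f = germ X Fs res G V g"
  moreover have "(V, g) \<in> germ X Fs res G V g"
    unfolding germ_def using germ_eq_refl[OF G V] by simp
  ultimately have "(V, g) \<in> germ X Fs res G U f"
    by simp
  then show "germ_eq X Fs res G (U, f) (V, g)"
    unfolding germ_def by simp
next
  assume eq: "germ_eq X Fs res G (U, f) (V, g)"
  have "germ_eq X Fs res G (U, f) (W, h) \<longleftrightarrow> germ_eq X Fs res G (V, g) (W, h)" for W h
    using germ_eq_trans[OF G] germ_eq_sym[OF G] eq by metis
  then show "germ X Fs res G U f = germ X Fs res G V g"
    unfolding germ_def by auto
qed

end

section \<open>The space of germs\<close>

lemma homeomorphic_map_local_section:
  assumes p: "continuous_map E Z p" and s: "local_section E Z p V s"
  shows "homeomorphic_map (subtopology E (s ` V)) (subtopology Z V) p"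
proof -
  have s_cont: "continuous_map (subtopology Z V) E s" and ps: "\<And>z. z \<in> V \<Longrightarrow> p (s z) = z"
    using s by (simp_all add: local_section_def)
  have "homeomorphic_maps (subtopology E (s ` V)) (subtopology Z V) p s"
    unfolding homeomorphic_maps_def
  proof (intro conjI ballI)
    show "continuous_map (subtopology E (s ` V)) (subtopology Z V) p"
    proof (rule continuous_map_into_subtopology)
      show "continuous_map (subtopology E (s ` V)) Z p"
        using p by (rule continuous_map_from_subtopology)
      show "p \<in> topspace (subtopology E (s ` V)) \<rightarrow> V"
        using ps by fastforce
    qed
    show "continuous_map (subtopology Z V) (subtopology E (s ` V)) s"
      by (rule continuous_map_into_subtopology[OF s_cont]) fastforce
  next
    fix x assume "x \<in> topspace (subtopology E (s ` V))"
    then obtain z where "z \<in> V" "x = s z"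
      by auto
    then show "s (p x) = x"
      using ps by simp
  next
    fix z assume "z \<in> topspace (subtopology Z V)"
    then show "p (s z) = z"
      using ps by simp
  qed
  then show ?thesis
    by (rule homeomorphic_maps_imp_map)
qed

lemma Hausdorff_separate_fibres:
  assumes p: "continuous_map E Z p" and Z: "Hausdorff_space Z"
    and x: "x \<in> topspace E" and y: "y \<in> topspace E" and "p x \<noteq> p y"
  shows "\<exists>A B. openin E A \<and> openin E B \<and> x \<in> A \<and> y \<in> B \<and> disjnt A B"
proof -
  have "p x \<in> topspace Z" "p y \<in> topspace Z"
    using continuous_map_image_subset_topspace[OF p] x y by blast+
  then obtain A B where AB: "openin Z A" "openin Z B" "p x \<in> A" "p y \<in> B" "disjnt A B"
    using Z \<open>p x \<noteq> p y\<close> unfolding Hausdorff_space_def by blast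
  show ?thesis
  proof (intro exI conjI)
    show "openin E {z \<in> topspace E. p z \<in> A}" "openin E {z \<in> topspace E. p z \<in> B}"
      using AB(1,2) by (simp_all add: openin_continuous_map_preimage[OF p])
    show "x \<in> {z \<in> topspace E. p z \<in> A}" "y \<in> {z \<in> topspace E. p z \<in> B}"
      using x y AB(3,4) by simp_all
    show "disjnt {z \<in> topspace E. p z \<in> A} {z \<in> topspace E. p z \<in> B}"
      using AB(5) by (auto simp: disjnt_def)
  qed
qed

lemma p1_fdot [simp]: "p1 (fdot X Fs res U f G) = G"
  by (simp add: p1_def fdot_def)

lemma fdot_eq_iff:
  "fdot X Fs res U f G = fdot X Fs res V g H \<longleftrightarrow> G = H \<and> germ X Fs res G U f = germ X Fs res H V g"
  by (simp add: fdot_def)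

lemma Gbar_if_in_Nq:
  assumes "G \<in> Nq X q" "q \<subseteq> Reg X U" "U \<in> Opens X"
  shows "U \<in> Gbar X G"
proof -
  have "G \<in> St X" "q \<in> G"
    using assms(1) by (simp_all add: Nq_def)
  then have "Reg X U \<in> G"
    using St_upclosed Reg_in_RO assms(2) by metis
  then show ?thesis
    using assms(3) by (simp add: Gbar_def)
qed

lemma B1E:
  assumes "b \<in> B1 X Fs res"
  obtains q U f where "q \<in> RO X" "q \<subseteq> Reg X U" "U \<in> Opens X" "f \<in> Fs U"
    "b = fdot X Fs res U f ` Nq X q"
  using assms unfolding B1_def by blast

lemma B1I:
  "q \<in> RO X \<Longrightarrow> q \<subseteq> Reg X U \<Longrightarrow> U \<in> Opens X \<Longrightarrow> f \<in> Fs U \<Longrightarrow> fdot X Fs res U f ` Nq X q \<in> B1 X Fs res"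
  unfolding B1_def by blast

lemma Lambda1E:
  assumes "x \<in> Lambda1 X Fs res"
  obtains G U f where "G \<in> St X" "U \<in> Gbar X G" "f \<in> Fs U" "x = fdot X Fs res U f G"
proof -
  obtain G c where x: "x = (G, c)" "G \<in> St X" "c \<in> stalk X Fs res G"
    using assms unfolding Lambda1_def by blast
  moreover obtain U f where "U \<in> Gbar X G" "f \<in> Fs U" "c = germ X Fs res G U f"
    using x(3) unfolding stalk_def by blast
  ultimately show thesis
    using that by (simp add: fdot_def)
qed

lemma fdot_in_Lambda1:
  assumes "G \<in> St X" "U \<in> Gbar X G" "f \<in> Fs U"
  shows "fdot X Fs res U f G \<in> Lambda1 X Fs res"
proof -
  have "germ X Fs res G U f \<in> stalk X Fs res G"
    using assms(2,3) unfolding stalk_def by blast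
  then show ?thesis
    using assms(1) unfolding Lambda1_def fdot_def by blast
qed

lemma Union_B1: "\<Union>(B1 X Fs res) = Lambda1 X Fs res"
proof
  show "\<Union>(B1 X Fs res) \<subseteq> Lambda1 X Fs res"
  proof
    fix x assume "x \<in> \<Union>(B1 X Fs res)"
    then obtain b where b: "b \<in> B1 X Fs res" "x \<in> b"
      by blast
    obtain q U f where q: "q \<in> RO X" "q \<subseteq> Reg X U" "U \<in> Opens X" "f \<in> Fs U"
      "b = fdot X Fs res U f ` Nq X q"
      using b(1) by (rule B1E)
    then obtain G where G: "G \<in> Nq X q" "x = fdot X Fs res U f G"
      using b(2) by blast
    have "G \<in> St X"
      using G(1) by (simp add: Nq_def)
    moreover have "U \<in> Gbar X G"
      using G(1) q(2,3) by (rule Gbar_if_in_Nq)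
    ultimately show "x \<in> Lambda1 X Fs res"
      unfolding G(2) using q(4) by (rule fdot_in_Lambda1)
  qed
  show "Lambda1 X Fs res \<subseteq> \<Union>(B1 X Fs res)"
  proof
    fix x assume "x \<in> Lambda1 X Fs res"
    then obtain G U f where G: "G \<in> St X" "U \<in> Gbar X G" "f \<in> Fs U" "x = fdot X Fs res U f G"
      by (rule Lambda1E)
    then have "U \<in> Opens X" "G \<in> Nq X (Reg X U)"
      by (auto simp: Gbar_def Nq_def)
    moreover have "fdot X Fs res U f ` Nq X (Reg X U) \<in> B1 X Fs res"
      using \<open>U \<in> Opens X\<close> G(3) by (intro B1I) simp_all
    ultimately show "x \<in> \<Union>(B1 X Fs res)"
      using G(4) by blast
  qed
qed

lemma topspace_tau1: "topspace (tau1 X Fs res) = Lambda1 X Fs res"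
  by (simp add: tau1_def Union_B1)

context presheaf_on
begin

lemma fdot_in_image_iff:
  assumes G: "G \<in> St X" and "r \<subseteq> Reg X V" "V \<in> Opens X" "g \<in> Fs V"
  shows "fdot X Fs res U f G \<in> fdot X Fs res V g ` Nq X r \<longleftrightarrow> r \<in> G \<and> germ_eq X Fs res G (U, f) (V, g)"
proof -
  have "fdot X Fs res U f G \<in> fdot X Fs res V g ` Nq X r \<longleftrightarrow>
      G \<in> Nq X r \<and> germ X Fs res G U f = germ X Fs res G V g"
    by (auto simp: image_iff fdot_eq_iff)
  also have "\<dots> \<longleftrightarrow> r \<in> G \<and> germ_eq X Fs res G (U, f) (V, g)"
  proof (cases "r \<in> G")
    case True
    then have "V \<in> Gbar X G"
      using G assms(2,3) Gbar_if_in_Nq[of G X r V] by (simp add: Nq_def)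
    then show ?thesis
      using True G same_germ_iff[OF G _ assms(4)] by (simp add: Nq_def)
  qed (simp add: Nq_def)
  finally show ?thesis .
qed

lemma fdot_in_B1_locally:
  assumes G: "G \<in> St X" and "b \<in> B1 X Fs res" "fdot X Fs res U f G \<in> b"
  obtains t where "t \<in> G" "\<And>H. H \<in> Nq X t \<Longrightarrow> fdot X Fs res U f H \<in> b"
proof -
  obtain r V g where r: "r \<in> RO X" "r \<subseteq> Reg X V" "V \<in> Opens X" "g \<in> Fs V"
    and b: "b = fdot X Fs res V g ` Nq X r"
    using assms(2) by (rule B1E)
  then have "r \<in> G" "germ_eq X Fs res G (U, f) (V, g)"
    using assms(3) fdot_in_image_iff[OF G r(2-4)] by simp_all
  moreover obtain s where "s \<in> G"
    and s: "\<And>H. H \<in> Nq X s \<Longrightarrow> germ_eq X Fs res H (U, f) (V, g) \<longleftrightarrow> germ_eq X Fs res G (U, f) (V, g)"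
    using germ_eq_locally_constant[OF G, where U=U and f=f and V=V and g=g] by blast
  moreover have "fdot X Fs res U f H \<in> b" if "H \<in> Nq X (r \<inter> s)" for H
  proof -
    have "s \<in> RO X"
      using \<open>s \<in> G\<close> St_subset_RO[OF G] by blast
    then have "H \<in> Nq X r" "H \<in> Nq X s"
      using that Nq_Int[OF r(1)] by blast+
    then show ?thesis
      using s calculation(2) fdot_in_image_iff[OF _ r(2-4)] unfolding b by (auto simp: Nq_def)
  qed
  ultimately show thesis
    using St_Int[OF G] that by blast
qed

lemma base_Int_property_B1: "base_Int_property (B1 X Fs res)"
  unfolding base_Int_property_def
proof (intro ballI)
  fix b1 b2 x assume b1: "b1 \<in> B1 X Fs res" and b2: "b2 \<in> B1 X Fs res" and x: "x \<in> b1 \<inter> b2"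
  obtain q U f where q: "q \<in> RO X" "q \<subseteq> Reg X U" "U \<in> Opens X" "f \<in> Fs U"
    and b1_eq: "b1 = fdot X Fs res U f ` Nq X q"
    using b1 by (rule B1E)
  obtain G where G: "G \<in> Nq X q" "x = fdot X Fs res U f G"
    using x unfolding b1_eq by blast
  have St: "G \<in> St X"
    using G(1) by (simp add: Nq_def)
  have "fdot X Fs res U f G \<in> b2"
    using x G(2) by simp
  then obtain t where t: "t \<in> G" "\<And>H. H \<in> Nq X t \<Longrightarrow> fdot X Fs res U f H \<in> b2"
    using fdot_in_B1_locally[OF St b2] by blast
  have tRO: "t \<in> RO X"
    using t(1) St_subset_RO[OF St] by blast
  let ?b = "fdot X Fs res U f ` Nq X (q \<inter> t)"
  have b: "?b \<in> B1 X Fs res"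
    using q(2-4) RO_Int[OF q(1) tRO] by (intro B1I) auto
  have "G \<in> Nq X t"
    using St t(1) by (simp add: Nq_def)
  with G(1) have "G \<in> Nq X (q \<inter> t)"
    by (simp add: Nq_Int[OF q(1) tRO])
  then have x_in: "x \<in> ?b"
    using G(2) by blast
  have sub1: "?b \<subseteq> b1"
    unfolding b1_eq using Nq_mono[OF Int_lower1 q(1), of t] by (rule image_mono)
  have sub2: "?b \<subseteq> b2"
  proof
    fix y assume "y \<in> ?b"
    then obtain H where "H \<in> Nq X (q \<inter> t)" "y = fdot X Fs res U f H"
      by blast
    then show "y \<in> b2"
      using t(2) Nq_mono[OF Int_lower2 tRO] by blast
  qed
  show "\<exists>b\<in>B1 X Fs res. x \<in> b \<and> b \<subseteq> b1 \<inter> b2"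
  proof
    show "x \<in> ?b \<and> ?b \<subseteq> b1 \<inter> b2"
      by (simp add: x_in sub1 sub2)
  qed (fact b)
qed

lemma openin_tau1_iff:
  "openin (tau1 X Fs res) S \<longleftrightarrow> (\<forall>x\<in>S. \<exists>b\<in>B1 X Fs res. x \<in> b \<and> b \<subseteq> S)"
  unfolding tau1_def by (rule openin_topology_generated_by_base_iff[OF base_Int_property_B1])

lemma openin_tau1_B1: "b \<in> B1 X Fs res \<Longrightarrow> openin (tau1 X Fs res) b"
  unfolding tau1_def by (rule topology_generated_by_Basis)

lemma openin_fdot_preimage:
  assumes S: "openin (tau1 X Fs res) S"
  shows "openin (StoneTop X) {G \<in> Nq X (Reg X U). fdot X Fs res U f G \<in> S}"
    (is "openin _ ?P")
  unfolding openin_StoneTop_iff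
proof
  fix G assume G: "G \<in> ?P"
  then have St: "G \<in> St X" and "Reg X U \<in> G"
    by (simp_all add: Nq_def)
  obtain b where b: "b \<in> B1 X Fs res" "fdot X Fs res U f G \<in> b" "b \<subseteq> S"
    using S G unfolding openin_tau1_iff by blast
  then obtain t where t: "t \<in> G" "\<And>H. H \<in> Nq X t \<Longrightarrow> fdot X Fs res U f H \<in> b"
    using fdot_in_B1_locally[OF St b(1,2)] by blast
  have tRO: "t \<in> RO X"
    using t(1) St_subset_RO[OF St] by blast
  have "t \<inter> Reg X U \<in> RO X"
    using RO_Int[OF tRO Reg_in_RO] .
  moreover have "G \<in> Nq X (t \<inter> Reg X U)"
    using St St_Int[OF St t(1) \<open>Reg X U \<in> G\<close>] by (simp add: Nq_def)
  moreover have "Nq X (t \<inter> Reg X U) \<subseteq> ?P"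
  proof
    fix H assume "H \<in> Nq X (t \<inter> Reg X U)"
    then have "H \<in> Nq X t" "H \<in> Nq X (Reg X U)"
      using Nq_mono[OF Int_lower1 tRO] Nq_mono[OF Int_lower2 Reg_in_RO] by blast+
    then show "H \<in> ?P"
      using t(2) b(3) by blast
  qed
  ultimately show "\<exists>q\<in>RO X. G \<in> Nq X q \<and> Nq X q \<subseteq> ?P"
    by blast
qed

lemma continuous_map_fdot:
  assumes U: "U \<in> Opens X" "f \<in> Fs U"
  shows "continuous_map (subtopology (StoneTop X) (Nq X (Reg X U))) (tau1 X Fs res) (fdot X Fs res U f)"
  unfolding continuous_map_def
proof (intro conjI allI impI)
  have N: "topspace (subtopology (StoneTop X) (Nq X (Reg X U))) = Nq X (Reg X U)"
    using Nq_subset_St[of X "Reg X U"] by (simp add: topspace_StoneTop Int_absorb1)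
  show "fdot X Fs res U f \<in> topspace (subtopology (StoneTop X) (Nq X (Reg X U))) \<rightarrow> topspace (tau1 X Fs res)"
  proof
    fix G assume "G \<in> topspace (subtopology (StoneTop X) (Nq X (Reg X U)))"
    then have "G \<in> Nq X (Reg X U)"
      unfolding N .
    then have "G \<in> St X" "U \<in> Gbar X G"
      using Nq_subset_St Gbar_if_in_Nq[OF _ order_refl U(1)] by blast+
    then show "fdot X Fs res U f G \<in> topspace (tau1 X Fs res)"
      unfolding topspace_tau1 using U(2) by (intro fdot_in_Lambda1)
  qed
  fix S assume "openin (tau1 X Fs res) S"
  then show "openin (subtopology (StoneTop X) (Nq X (Reg X U)))
      {G \<in> topspace (subtopology (StoneTop X) (Nq X (Reg X U))). fdot X Fs res U f G \<in> S}"
    unfolding N using openin_fdot_preimage by (simp add: openin_open_subtopology openin_StoneTop_Nq)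
qed

lemma continuous_map_p1: "continuous_map (tau1 X Fs res) (StoneTop X) p1"
  unfolding continuous_map_def
proof (intro conjI allI impI)
  show "p1 \<in> topspace (tau1 X Fs res) \<rightarrow> topspace (StoneTop X)"
    unfolding topspace_tau1 topspace_StoneTop by (auto elim!: Lambda1E)
  fix S assume S: "openin (StoneTop X) S"
  let ?P = "{x \<in> topspace (tau1 X Fs res). p1 x \<in> S}"
  show "openin (tau1 X Fs res) ?P"
    unfolding openin_tau1_iff
  proof
    fix x assume x: "x \<in> ?P"
    then obtain G U f where G: "G \<in> St X" "U \<in> Gbar X G" "f \<in> Fs U" and x_eq: "x = fdot X Fs res U f G"
      unfolding topspace_tau1 by (auto elim: Lambda1E)
    then have "G \<in> S"
      using x by simp
    then obtain q where q: "q \<in> RO X" "G \<in> Nq X q" "Nq X q \<subseteq> S"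
      using S unfolding openin_StoneTop_iff by blast
    have U: "U \<in> Opens X" "Reg X U \<in> G"
      using G(2) by (simp_all add: Gbar_def)
    let ?b = "fdot X Fs res U f ` Nq X (q \<inter> Reg X U)"
    have b: "?b \<in> B1 X Fs res"
      using q(1) U(1) G(3) by (intro B1I) (simp_all add: RO_Int)
    have "G \<in> Nq X (q \<inter> Reg X U)"
      using q(2) U(2) St_Int[OF G(1)] by (simp add: Nq_def)
    then have x_in: "x \<in> ?b"
      using x_eq by blast
    have "?b \<subseteq> topspace (tau1 X Fs res)"
      using openin_subset[OF openin_tau1_B1[OF b]] .
    moreover have "p1 ` ?b \<subseteq> S"
      using Nq_mono[OF Int_lower1 q(1)] q(3) by (auto simp: image_image)
    ultimately have sub: "?b \<subseteq> ?P"
      by auto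
    show "\<exists>b\<in>B1 X Fs res. x \<in> b \<and> b \<subseteq> ?P"
    proof
      show "x \<in> ?b \<and> ?b \<subseteq> ?P"
        using x_in sub by simp
    qed (fact b)
  qed
qed

lemma compactin_tau1_B1:
  assumes "b \<in> B1 X Fs res"
  shows "compactin (tau1 X Fs res) b"
proof -
  obtain q U f where q: "q \<in> RO X" "q \<subseteq> Reg X U" "U \<in> Opens X" "f \<in> Fs U"
    and b: "b = fdot X Fs res U f ` Nq X q"
    using assms by (rule B1E)
  have "compactin (subtopology (StoneTop X) (Nq X (Reg X U))) (Nq X q)"
    using compactin_StoneTop_Nq[OF q(1)] Nq_mono[OF q(2) Reg_in_RO] by (simp add: compactin_subtopology)
  then show ?thesis
    unfolding b using continuous_map_fdot[OF q(3,4)] by (rule image_compactin)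
qed

lemma locally_compact_tau1: "locally_compact_space (tau1 X Fs res)"
  unfolding locally_compact_space_def
proof
  fix x assume "x \<in> topspace (tau1 X Fs res)"
  then obtain b where "b \<in> B1 X Fs res" "x \<in> b"
    unfolding topspace_tau1 Union_B1[symmetric] by blast
  then show "\<exists>U K. openin (tau1 X Fs res) U \<and> compactin (tau1 X Fs res) K \<and> x \<in> U \<and> U \<subseteq> K"
    using openin_tau1_B1 compactin_tau1_B1 by blast
qed

lemma separate_distinct_germs:
  assumes G: "G \<in> St X" and U: "U \<in> Gbar X G" "f \<in> Fs U" and V: "V \<in> Gbar X G" "g \<in> Fs V"
    and not_eq: "\<not> germ_eq X Fs res G (U, f) (V, g)"
  shows "\<exists>A B. openin (tau1 X Fs res) A \<and> openin (tau1 X Fs res) B \<and>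
    fdot X Fs res U f G \<in> A \<and> fdot X Fs res V g G \<in> B \<and> disjnt A B"
proof -
  have UO: "U \<in> Opens X" "Reg X U \<in> G" and VO: "V \<in> Opens X" "Reg X V \<in> G"
    using U(1) V(1) by (simp_all add: Gbar_def)
  obtain s where "s \<in> G"
    and s: "\<And>K. K \<in> Nq X s \<Longrightarrow> germ_eq X Fs res K (U, f) (V, g) \<longleftrightarrow> germ_eq X Fs res G (U, f) (V, g)"
    using germ_eq_locally_constant[OF G, where U=U and f=f and V=V and g=g] by blast
  have sRO: "s \<in> RO X"
    using \<open>s \<in> G\<close> St_subset_RO[OF G] by blast
  let ?A = "fdot X Fs res U f ` Nq X (s \<inter> Reg X U)"
  let ?B = "fdot X Fs res V g ` Nq X (s \<inter> Reg X V)"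
  show ?thesis
  proof (intro exI conjI)
    show "openin (tau1 X Fs res) ?A" "openin (tau1 X Fs res) ?B"
      using sRO UO(1) VO(1) U(2) V(2) by (auto intro!: openin_tau1_B1 B1I RO_Int)
    show "fdot X Fs res U f G \<in> ?A" "fdot X Fs res V g G \<in> ?B"
      using G \<open>s \<in> G\<close> UO(2) VO(2) St_Int[OF G] by (auto simp: Nq_def)
    show "disjnt ?A ?B"
      unfolding disjnt_iff
    proof (intro allI notI, elim conjE)
      fix z assume "z \<in> ?A" "z \<in> ?B"
      then obtain K where K: "K \<in> Nq X (s \<inter> Reg X U)" "z = fdot X Fs res U f K"
        by blast
      then have "K \<in> St X" "K \<in> Nq X s"
        using Nq_mono[OF Int_lower1 sRO] by (auto simp: Nq_def)
      then have "germ_eq X Fs res K (U, f) (V, g)"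
        using \<open>z \<in> ?B\<close> fdot_in_image_iff[OF \<open>K \<in> St X\<close> Int_lower2 VO(1) V(2)] K(2) by simp
      then show False
        using s[OF \<open>K \<in> Nq X s\<close>] not_eq by simp
    qed
  qed
qed

lemma Hausdorff_tau1: "Hausdorff_space (tau1 X Fs res)"
  unfolding Hausdorff_space_def
proof (intro allI impI, elim conjE)
  fix x y assume x: "x \<in> topspace (tau1 X Fs res)" and y: "y \<in> topspace (tau1 X Fs res)" and "x \<noteq> y"
  obtain G U f where G: "G \<in> St X" "U \<in> Gbar X G" "f \<in> Fs U" and x_eq: "x = fdot X Fs res U f G"
    using x unfolding topspace_tau1 by (rule Lambda1E)
  obtain H V g where H: "H \<in> St X" "V \<in> Gbar X H" "g \<in> Fs V" and y_eq: "y = fdot X Fs res V g H"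
    using y unfolding topspace_tau1 by (rule Lambda1E)
  show "\<exists>A B. openin (tau1 X Fs res) A \<and> openin (tau1 X Fs res) B \<and> x \<in> A \<and> y \<in> B \<and> disjnt A B"
  proof (cases "G = H")
    case False
    then show ?thesis
      using Hausdorff_separate_fibres[OF continuous_map_p1 Hausdorff_StoneTop x y] x_eq y_eq by simp
  next
    case True
    then have "\<not> germ_eq X Fs res G (U, f) (V, g)"
      using \<open>x \<noteq> y\<close> same_germ_iff[OF G(1) _ H(3)] H(2) x_eq y_eq by (auto simp: fdot_eq_iff)
    then show ?thesis
      using separate_distinct_germs[OF G _ H(3)] H(2) True x_eq y_eq by simp
  qed
qed

lemma stalk_eq_fiber:
  "{G} \<times> stalk X Fs res G = {x \<in> topspace (tau1 X Fs res). p1 x \<in> {G}}" if "G \<in> St X"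
  using that by (auto simp: topspace_tau1 Lambda1_def p1_def)

lemma closedin_stalk:
  assumes "G \<in> St X"
  shows "closedin (tau1 X Fs res) ({G} \<times> stalk X Fs res G)"
  unfolding stalk_eq_fiber[OF assms]
proof (rule closedin_continuous_map_preimage[OF continuous_map_p1])
  show "closedin (StoneTop X) {G}"
    using assms
    by (intro closedin_t1_singleton Hausdorff_imp_t1_space Hausdorff_StoneTop) (simp add: topspace_StoneTop)
qed

lemma discrete_stalk:
  assumes G: "G \<in> St X"
  shows "subtopology (tau1 X Fs res) ({G} \<times> stalk X Fs res G) = discrete_topology ({G} \<times> stalk X Fs res G)"
proof -
  let ?F = "{G} \<times> stalk X Fs res G"
  have "discrete_topology ?F = subtopology (tau1 X Fs res) ?F"
    unfolding discrete_topology_unique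
  proof (intro conjI ballI)
    show "topspace (subtopology (tau1 X Fs res) ?F) = ?F"
      using stalk_eq_fiber[OF G] by auto
    fix x assume x: "x \<in> ?F"
    then obtain U f where U: "U \<in> Gbar X G" "f \<in> Fs U" and x_eq: "x = fdot X Fs res U f G"
      unfolding stalk_def fdot_def by blast
    let ?b = "fdot X Fs res U f ` Nq X (Reg X U)"
    have "openin (tau1 X Fs res) ?b"
      using U by (intro openin_tau1_B1 B1I) (simp_all add: Gbar_def)
    moreover have "?b \<inter> ?F = {x}"
    proof
      show "?b \<inter> ?F \<subseteq> {x}"
        using x_eq by (auto simp: fdot_def)
      show "{x} \<subseteq> ?b \<inter> ?F"
        using x x_eq U(1) G by (auto simp: Gbar_def Nq_def)
    qed
    ultimately show "openin (subtopology (tau1 X Fs res) ?F) {x}"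
      unfolding openin_subtopology by metis
  qed
  then show ?thesis
    by simp
qed

lemma not_compact_space_if_infinite_stalk:
  assumes G: "G \<in> St X" and inf: "infinite (stalk X Fs res G)"
  shows "\<not> compact_space (tau1 X Fs res)"
proof
  let ?F = "{G} \<times> stalk X Fs res G"
  assume "compact_space (tau1 X Fs res)"
  then have "compactin (tau1 X Fs res) ?F"
    using closedin_stalk[OF G] by (rule closedin_compact_space)
  then have "compact_space (discrete_topology ?F)"
    by (simp add: compactin_subspace flip: discrete_stalk[OF G])
  then have "finite ?F"
    by (simp add: compact_space_discrete_topology)
  then show False
    using inf by (simp add: finite_cartesian_product_iff)
qed

lemma local_section_fdot:
  assumes "U \<in> Opens X" "f \<in> Fs U"
  shows "local_section (tau1 X Fs res) (StoneTop X) p1 (Nq X (Reg X U)) (fdot X Fs res U f)"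
  unfolding local_section_def using continuous_map_fdot[OF assms] by (simp add: openin_StoneTop_Nq)

lemma etale_tau1: "etale (tau1 X Fs res) (StoneTop X) p1"
  unfolding etale_def
proof (intro conjI ballI continuous_map_p1)
  fix e assume "e \<in> topspace (tau1 X Fs res)"
  then obtain G U f where G: "G \<in> St X" "U \<in> Gbar X G" "f \<in> Fs U" and e: "e = fdot X Fs res U f G"
    unfolding topspace_tau1 by (rule Lambda1E)
  then have U: "U \<in> Opens X" "G \<in> Nq X (Reg X U)"
    by (simp_all add: Gbar_def Nq_def)
  let ?W = "fdot X Fs res U f ` Nq X (Reg X U)"
  have "openin (tau1 X Fs res) ?W"
    using U(1) G(3) by (intro openin_tau1_B1 B1I) simp_all
  moreover have "e \<in> ?W"
    using U(2) e by blast
  moreover have "p1 ` ?W = Nq X (Reg X U)"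
    by (simp add: image_image)
  moreover have "homeomorphic_map (subtopology (tau1 X Fs res) ?W) (subtopology (StoneTop X) (Nq X (Reg X U))) p1"
    by (rule homeomorphic_map_local_section[OF continuous_map_p1 local_section_fdot[OF U(1) G(3)]])
  ultimately show "\<exists>W. openin (tau1 X Fs res) W \<and> e \<in> W \<and> openin (StoneTop X) (p1 ` W) \<and>
      homeomorphic_map (subtopology (tau1 X Fs res) W) (subtopology (StoneTop X) (p1 ` W)) p1"
    using openin_StoneTop_Nq[OF Reg_in_RO] by metis
qed

end

theorem mainTheorem10:
  fixes X :: "'a topology" and Fs :: "'a set \<Rightarrow> 'b set" and res :: "'a set \<Rightarrow> 'a set \<Rightarrow> 'b \<Rightarrow> 'b"
  assumes "presheaf X Fs res"
  shows "topspace (tau1 X Fs res) = Lambda1 X Fs res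
    \<and> is_base (tau1 X Fs res) (B1 X Fs res)
    \<and> (\<forall>b\<in>B1 X Fs res. compactin (tau1 X Fs res) b)
    \<and> locally_compact_space (tau1 X Fs res)
    \<and> (\<forall>G\<in>St X. subtopology (tau1 X Fs res) ({G} \<times> stalk X Fs res G) = discrete_topology ({G} \<times> stalk X Fs res G)
         \<and> closedin (tau1 X Fs res) ({G} \<times> stalk X Fs res G))
    \<and> continuous_map (tau1 X Fs res) (StoneTop X) p1
    \<and> (\<forall>U\<in>Opens X. \<forall>f\<in>Fs U.
         local_section (tau1 X Fs res) (StoneTop X) p1 (Nq X (Reg X U)) (fdot X Fs res U f))
    \<and> etale (tau1 X Fs res) (StoneTop X) p1
    \<and> Hausdorff_space (tau1 X Fs res)
    \<and> zero_dimensional (tau1 X Fs res)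
    \<and> completely_regular_space (tau1 X Fs res)
    \<and> ((\<exists>G\<in>St X. infinite (stalk X Fs res G)) \<longrightarrow> \<not> compact_space (tau1 X Fs res))"
proof -
  interpret presheaf_on X Fs res
    using assms by (rule presheaf_on.intro)
  have base: "is_base (tau1 X Fs res) (B1 X Fs res)"
    unfolding tau1_def by (rule is_base_topology_generated_by[OF base_Int_property_B1])
  have compact: "\<forall>b\<in>B1 X Fs res. compactin (tau1 X Fs res) b"
    using compactin_tau1_B1 by blast
  have "zero_dimensional (tau1 X Fs res)"
    unfolding zero_dimensional_def using base compact compactin_imp_closedin[OF Hausdorff_tau1] by blast
  moreover have "completely_regular_space (tau1 X Fs res)"
    using locally_compact_regular_imp_completely_regular_space locally_compact_tau1 Hausdorff_tau1 by blast
  moreover have "(\<exists>G\<in>St X. infinite (stalk X Fs res G)) \<longrightarrow> \<not> compact_space (tau1 X Fs res)"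
    using not_compact_space_if_infinite_stalk by blast
  ultimately show ?thesis
    using topspace_tau1 base compact locally_compact_tau1 discrete_stalk closedin_stalk continuous_map_p1
      local_section_fdot etale_tau1 Hausdorff_tau1 by blast
qed

end
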